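(* Let $F\in\mathrm{Lip}_{\rm loc}(\mathbb{R})$ satisfy $F(p)=p$ for $p\in[0,1]$ and $F(p)\le p$ for $p\in[-1,0]$, and let $g(x)=\max\{1-|x|,0\}$ for $x\in\mathbb{R}$. For $\varepsilon>0$ let $u^\varepsilon$ be the viscosity solution of $u^\varepsilon_t+F(u^\varepsilon_x)=\varepsilon u^\varepsilon_{xx}$ in $\mathbb{R}\times(0,\infty)$, $u^\varepsilon(x,0)=g(x)$, and let $u$ be the viscosity solution of $u_t+F(u_x)=0$ in $\mathbb{R}\times(0,\infty)$, $u(x,0)=g(x)$. Then for every $\varepsilon\in(0,\tfrac14)$, \[ |u^\varepsilon(0,1)-u(0,1)|\ge \frac{\mathrm{e}-1}{\sqrt{\pi}\,\mathrm{e}}\sqrt{\varepsilon}. \] *)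

theory Defs
  imports "HOL-Analysis.Analysis"
begin

text \<open>Functions of (x,t) are curried: u x t. Only t \<ge> 0 matters.\<close>

definition loc_lipschitz :: "(real \<Rightarrow> real) \<Rightarrow> bool" where
  "loc_lipschitz F \<longleftrightarrow> (\<forall>K. compact K \<longrightarrow> (\<exists>L. L-lipschitz_on K F))"

definition test_fn ::
  "(real \<Rightarrow> real \<Rightarrow> real) \<Rightarrow> (real \<Rightarrow> real \<Rightarrow> real) \<Rightarrow> (real \<Rightarrow> real \<Rightarrow> real)
     \<Rightarrow> (real \<Rightarrow> real \<Rightarrow> real) \<Rightarrow> bool" where
  "test_fn \<phi> \<phi>x \<phi>t \<phi>xx \<longleftrightarrow>
     (\<forall>x t. ((\<lambda>y. \<phi> y t) has_real_derivative \<phi>x x t) (at x)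
          \<and> ((\<lambda>s. \<phi> x s) has_real_derivative \<phi>t x t) (at t)
          \<and> ((\<lambda>y. \<phi>x y t) has_real_derivative \<phi>xx x t) (at x))
   \<and> continuous_on UNIV (\<lambda>(x,t). \<phi> x t)
   \<and> continuous_on UNIV (\<lambda>(x,t). \<phi>x x t)
   \<and> continuous_on UNIV (\<lambda>(x,t). \<phi>t x t)
   \<and> continuous_on UNIV (\<lambda>(x,t). \<phi>xx x t)"

definition loc_max_at :: "(real \<Rightarrow> real \<Rightarrow> real) \<Rightarrow> real \<Rightarrow> real \<Rightarrow> bool" where
  "loc_max_at w x0 t0 \<longleftrightarrow> (\<exists>r>0. \<forall>x t. t > 0 \<and> dist (x,t) (x0,t0) < r \<longrightarrow> w x t \<le> w x0 t0)"

definition loc_min_at :: "(real \<Rightarrow> real \<Rightarrow> real) \<Rightarrow> real \<Rightarrow> real \<Rightarrow> bool" where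
  "loc_min_at w x0 t0 \<longleftrightarrow> (\<exists>r>0. \<forall>x t. t > 0 \<and> dist (x,t) (x0,t0) < r \<longrightarrow> w x t \<ge> w x0 t0)"

text \<open>Viscosity solution of u_t + F(u_x) = eps u_xx in R x (0,oo), u(x,0) = g(x).
  eps = 0 gives the first-order Hamilton-Jacobi equation.\<close>
definition visc_sol ::
  "(real \<Rightarrow> real) \<Rightarrow> real \<Rightarrow> (real \<Rightarrow> real) \<Rightarrow> (real \<Rightarrow> real \<Rightarrow> real) \<Rightarrow> bool" where
  "visc_sol F eps g u \<longleftrightarrow>
     continuous_on (UNIV \<times> {0..}) (\<lambda>(x,t). u x t)
   \<and> (\<forall>x. u x 0 = g x)
   \<and> (\<forall>\<phi> \<phi>x \<phi>t \<phi>xx x0 t0. test_fn \<phi> \<phi>x \<phi>t \<phi>xx \<and> t0 > 0 \<longrightarrow>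
        (loc_max_at (\<lambda>x t. u x t - \<phi> x t) x0 t0 \<longrightarrow>
           \<phi>t x0 t0 + F (\<phi>x x0 t0) \<le> eps * \<phi>xx x0 t0)
      \<and> (loc_min_at (\<lambda>x t. u x t - \<phi> x t) x0 t0 \<longrightarrow>
           \<phi>t x0 t0 + F (\<phi>x x0 t0) \<ge> eps * \<phi>xx x0 t0))"

text \<open>Uniqueness class: bounded and uniformly continuous on R x [0,oo).\<close>
definition BUC :: "(real \<Rightarrow> real \<Rightarrow> real) \<Rightarrow> bool" where
  "BUC u \<longleftrightarrow> bounded ((\<lambda>(x,t). u x t) ` (UNIV \<times> {0..}))
            \<and> uniformly_continuous_on (UNIV \<times> {0..}) (\<lambda>(x,t). u x t)"

end

theory Submission
  imports Defs
begin

text \<open>Both solutions are compared with explicit smooth barriers. For the inviscid equation the functions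
  \<open>d softplus ((x - t + 1) / d)\<close> lie above \<open>g\<close> and have slopes in \<open>[0, 1]\<close>, where \<open>F\<close> is the
  identity, so they are supersolutions; letting \<open>d \<rightarrow> 0\<close> gives \<open>u(0, 1) \<le> 0\<close>. For the viscous
  equation put \<open>e = sqrt \<epsilon>\<close> and \<open>Z = (x - t + 1) / e\<close>; then \<open>e W(Z, t)\<close>, where \<open>W\<close> solves the
  heat equation \<open>W\<^sub>t = W\<^sub>Z\<^sub>Z\<close> with initial data close to \<open>Z\<^sup>+ - 2 (Z - 2)\<^sup>+\<close>, has slopes in
  \<open>[-1, 1]\<close>, where \<open>F p \<le> p\<close>, so it is a subsolution, and it lies below \<open>g\<close> at \<open>t = 0\<close> as
  \<open>e \<le> 1/2\<close>. A Mills-ratio estimate of the Gaussian tail beyond \<open>2\<close> gives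
  \<open>W(0, 1) \<ge> (1 - exp (-1)) / sqrt pi\<close>.

  The comparisons use nothing but the definition of viscosity solution: a small penalisation makes a
  smooth barrier strict and the difference to the solution coercive, and then the difference has no
  interior minimum where the barrier touches.\<close>

section \<open>Comparison with smooth barriers\<close>

lemma test_fnI:
  assumes "\<And>x t. ((\<lambda>y. \<phi> y t) has_real_derivative \<phi>x x t) (at x)"
    and "\<And>x t. ((\<lambda>s. \<phi> x s) has_real_derivative \<phi>t x t) (at t)"
    and "\<And>x t. ((\<lambda>y. \<phi>x y t) has_real_derivative \<phi>xx x t) (at x)"
    and "continuous_on UNIV (\<lambda>p. \<phi> (fst p) (snd p))"
    and "continuous_on UNIV (\<lambda>p. \<phi>x (fst p) (snd p))"
    and "continuous_on UNIV (\<lambda>p. \<phi>t (fst p) (snd p))"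
    and "continuous_on UNIV (\<lambda>p. \<phi>xx (fst p) (snd p))"
  shows "test_fn \<phi> \<phi>x \<phi>t \<phi>xx"
  using assms unfolding test_fn_def case_prod_unfold by auto

lemma test_fnD:
  assumes "test_fn \<phi> \<phi>x \<phi>t \<phi>xx"
  shows "((\<lambda>y. \<phi> y t) has_real_derivative \<phi>x x t) (at x)"
    and "((\<lambda>s. \<phi> x s) has_real_derivative \<phi>t x t) (at t)"
    and "((\<lambda>y. \<phi>x y t) has_real_derivative \<phi>xx x t) (at x)"
    and "continuous_on UNIV (\<lambda>p. \<phi> (fst p) (snd p))"
    and "continuous_on UNIV (\<lambda>p. \<phi>x (fst p) (snd p))"
    and "continuous_on UNIV (\<lambda>p. \<phi>t (fst p) (snd p))"
    and "continuous_on UNIV (\<lambda>p. \<phi>xx (fst p) (snd p))"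
  using assms unfolding test_fn_def case_prod_unfold by auto

lemma test_fn_uminus:
  assumes "test_fn \<phi> \<phi>x \<phi>t \<phi>xx"
  shows "test_fn (\<lambda>x t. - \<phi> x t) (\<lambda>x t. - \<phi>x x t) (\<lambda>x t. - \<phi>t x t) (\<lambda>x t. - \<phi>xx x t)"
  by (rule test_fnI; intro DERIV_minus continuous_on_minus test_fnD[OF assms])

lemma test_fn_diff:
  assumes "test_fn \<phi> \<phi>x \<phi>t \<phi>xx" and "test_fn \<psi> \<psi>x \<psi>t \<psi>xx"
  shows "test_fn (\<lambda>x t. \<phi> x t - \<psi> x t) (\<lambda>x t. \<phi>x x t - \<psi>x x t)
           (\<lambda>x t. \<phi>t x t - \<psi>t x t) (\<lambda>x t. \<phi>xx x t - \<psi>xx x t)"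
  by (rule test_fnI; intro DERIV_diff continuous_on_diff test_fnD[OF assms(1)] test_fnD[OF assms(2)])

lemma test_fn_cmult:
  assumes "test_fn \<phi> \<phi>x \<phi>t \<phi>xx"
  shows "test_fn (\<lambda>x t. c * \<phi> x t) (\<lambda>x t. c * \<phi>x x t) (\<lambda>x t. c * \<phi>t x t) (\<lambda>x t. c * \<phi>xx x t)"
  by (rule test_fnI; intro DERIV_cmult continuous_on_mult continuous_on_const test_fnD[OF assms])

definition bracket :: "real \<Rightarrow> real" where
  "bracket x = sqrt (1 + x\<^sup>2)"

lemma bracket_ge_1: "1 \<le> bracket x"
  by (simp add: bracket_def)

lemma abs_le_bracket: "\<bar>x\<bar> \<le> bracket x"
  by (simp add: bracket_def real_le_rsqrt)

lemma abs_div_bracket_le_1: "\<bar>x / bracket x\<bar> \<le> 1"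
  using abs_le_bracket[of x] bracket_ge_1[of x] by (simp add: abs_div)

lemma bracket_has_derivative: "(bracket has_real_derivative x / bracket x) (at x)"
proof -
  have "0 < 1 + x\<^sup>2"
    by (simp add: add_pos_nonneg)
  then show ?thesis
    unfolding bracket_def[abs_def] by (auto intro!: derivative_eq_intros simp: field_simps)
qed

lemma bracket_slope_has_derivative:
  "((\<lambda>x. x / bracket x) has_real_derivative 1 / bracket x ^ 3) (at x)"
proof -
  have b: "bracket x \<noteq> 0"
    using bracket_ge_1[of x] by auto
  have "0 \<le> 1 + x\<^sup>2"
    by simp
  then have sq: "(bracket x)\<^sup>2 = 1 + x\<^sup>2"
    unfolding bracket_def by simp
  have "((\<lambda>x. x / bracket x) has_real_derivative
      (1 * bracket x - x * (x / bracket x)) / (bracket x * bracket x)) (at x)"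
    by (rule DERIV_divide[OF DERIV_ident bracket_has_derivative b])
  moreover have "(1 * bracket x - x * (x / bracket x)) / (bracket x * bracket x) = 1 / bracket x ^ 3"
    using b sq by (simp add: field_simps power2_eq_square power3_eq_cube)
  ultimately show ?thesis
    by simp
qed

lemma test_fn_bracket:
  "test_fn (\<lambda>x t. bracket x) (\<lambda>x t. x / bracket x) (\<lambda>x t. 0) (\<lambda>x t. 1 / bracket x ^ 3)"
proof -
  have cont: "continuous_on UNIV bracket"
    unfolding bracket_def by (intro continuous_intros)
  have pos: "\<And>x. bracket x \<noteq> 0"
    using bracket_ge_1 by (metis not_one_le_zero)
  show ?thesis
    using bracket_has_derivative bracket_slope_has_derivative pos
    by (intro test_fnI) (auto intro!: continuous_intros continuous_on_compose2[OF cont])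
qed

lemma test_fn_time_quadratic:
  "test_fn (\<lambda>x t. t + t\<^sup>2) (\<lambda>x t. 0) (\<lambda>x t. 1 + 2 * t) (\<lambda>x t. 0)"
  by (intro test_fnI) (auto intro!: derivative_eq_intros continuous_intros)

lemma loc_max_at_uminus_iff: "loc_max_at (\<lambda>x t. - w x t) x0 t0 \<longleftrightarrow> loc_min_at w x0 t0"
  unfolding loc_max_at_def loc_min_at_def by simp

lemma loc_min_at_uminus_iff: "loc_min_at (\<lambda>x t. - w x t) x0 t0 \<longleftrightarrow> loc_max_at w x0 t0"
  unfolding loc_max_at_def loc_min_at_def by simp

lemma loc_lipschitz_reflect:
  assumes "loc_lipschitz F"
  shows "loc_lipschitz (\<lambda>p. - F (- p))"
  unfolding loc_lipschitz_def
proof (intro allI impI)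
  fix K :: "real set"
  assume "compact K"
  then obtain L where "L-lipschitz_on (uminus ` K) F"
    using assms compact_negations unfolding loc_lipschitz_def by blast
  then have "(L * 1)-lipschitz_on K (\<lambda>p. F (- p))"
    by (intro lipschitz_on_compose2) (auto intro: lipschitz_intros)
  then show "\<exists>L. L-lipschitz_on K (\<lambda>p. - F (- p))"
    by auto
qed

lemma visc_sol_reflect:
  assumes "visc_sol F eps g u"
  shows "visc_sol (\<lambda>p. - F (- p)) eps (\<lambda>x. - g x) (\<lambda>x t. - u x t)"
  unfolding visc_sol_def
proof (intro conjI allI impI)
  have "continuous_on (UNIV \<times> {0..}) (\<lambda>(x, t). u x t)"
    using assms unfolding visc_sol_def by blast
  then show "continuous_on (UNIV \<times> {0..}) (\<lambda>(x, t). - u x t)"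
    unfolding case_prod_unfold by (rule continuous_on_minus)
next
  show "- u x 0 = - g x" for x
    using assms unfolding visc_sol_def by simp
next
  fix \<phi> \<phi>x \<phi>t \<phi>xx and x0 t0 :: real
  assume "test_fn \<phi> \<phi>x \<phi>t \<phi>xx \<and> 0 < t0"
  then have \<phi>: "test_fn (\<lambda>x t. - \<phi> x t) (\<lambda>x t. - \<phi>x x t) (\<lambda>x t. - \<phi>t x t) (\<lambda>x t. - \<phi>xx x t)"
    and t0: "0 < t0"
    using test_fn_uminus by auto
  have diff: "(\<lambda>x t. - u x t - \<phi> x t) = (\<lambda>x t. - (u x t - - \<phi> x t))"
    by simp
  show "\<phi>t x0 t0 + - F (- \<phi>x x0 t0) \<le> eps * \<phi>xx x0 t0"
    if "loc_max_at (\<lambda>x t. - u x t - \<phi> x t) x0 t0"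
    using that assms \<phi> t0 unfolding diff loc_max_at_uminus_iff visc_sol_def by fastforce
  show "eps * \<phi>xx x0 t0 \<le> \<phi>t x0 t0 + - F (- \<phi>x x0 t0)"
    if "loc_min_at (\<lambda>x t. - u x t - \<phi> x t) x0 t0"
    using that assms \<phi> t0 unfolding diff loc_min_at_uminus_iff visc_sol_def by fastforce
qed

lemma bounded_coercive_sublevel:
  fixes G :: "real \<Rightarrow> real \<Rightarrow> real"
  assumes coercive: "\<And>x t. 0 \<le> t \<Longrightarrow> a * \<bar>x\<bar> + b * t - c \<le> G x t"
    and a: "0 < a" and b: "0 < b"
  shows "bounded ((UNIV \<times> {0..}) \<inter> (\<lambda>(x, t). G x t) -` {..m})"
proof -
  have "norm p \<le> (m + c) / a + (m + c) / b" if "p \<in> (UNIV \<times> {0..}) \<inter> (\<lambda>(x, t). G x t) -` {..m}" for p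
  proof -
    obtain x t where p: "p = (x, t)"
      by fastforce
    with that have t: "0 \<le> t" and Gm: "G x t \<le> m"
      by auto
    have "0 \<le> a * \<bar>x\<bar>" and "0 \<le> b * t"
      using a b t by simp_all
    then have "a * \<bar>x\<bar> \<le> m + c" and "b * t \<le> m + c"
      using coercive[OF t, of x] Gm by linarith+
    then have "\<bar>x\<bar> \<le> (m + c) / a" and "t \<le> (m + c) / b"
      using a b by (simp_all add: field_simps)
    moreover have "norm p \<le> norm x + norm t"
      unfolding p by (rule norm_Pair_le)
    ultimately show ?thesis
      using t by simp
  qed
  then show ?thesis
    unfolding bounded_iff by blast
qed

lemma continuous_coercive_attains_min:
  fixes G :: "real \<Rightarrow> real \<Rightarrow> real"
  assumes cont: "continuous_on (UNIV \<times> {0..}) (\<lambda>(x, t). G x t)"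
    and coercive: "\<And>x t. 0 \<le> t \<Longrightarrow> a * \<bar>x\<bar> + b * t - c \<le> G x t"
    and a: "0 < a" and b: "0 < b"
  obtains x0 t0 where "\<And>x t. 0 \<le> t \<Longrightarrow> G x0 t0 \<le> G x t" and "0 \<le> t0"
proof -
  define K where "K = (UNIV \<times> {0..}) \<inter> (\<lambda>(x, t). G x t) -` {..G 0 0}"
  have "closed (UNIV \<times> {0::real..})"
    by (intro closed_Times) auto
  then have "closed K"
    unfolding K_def using cont by (intro continuous_closed_preimage) auto
  with bounded_coercive_sublevel[OF coercive a b] have compact: "compact K"
    by (simp add: K_def compact_eq_bounded_closed)
  have "(0, 0) \<in> K"
    by (simp add: K_def)
  then have nonempty: "K \<noteq> {}"
    by blast
  have "continuous_on K (\<lambda>(x, t). G x t)"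
    using cont by (rule continuous_on_subset) (auto simp: K_def)
  from continuous_attains_inf[OF compact nonempty this]
  obtain p0 where "p0 \<in> K" and min: "\<And>q. q \<in> K \<Longrightarrow> (\<lambda>(x, t). G x t) p0 \<le> (\<lambda>(x, t). G x t) q"
    by blast
  obtain x0 t0 where [simp]: "p0 = (x0, t0)"
    by fastforce
  from \<open>p0 \<in> K\<close> have p0: "0 \<le> t0" "G x0 t0 \<le> G 0 0"
    by (auto simp: K_def)
  have "G x0 t0 \<le> G x t" if "0 \<le> t" for x t
  proof (cases "G x t \<le> G 0 0")
    case True
    then show ?thesis
      using min[of "(x, t)"] that by (simp add: K_def)
  qed (use p0 in auto)
  then show ?thesis
    using p0(1) by (rule that)
qed

text \<open>Coercivity gives a global minimum of \<open>U - \<phi>\<close>; if it were negative it would lie at some \<open>t > 0\<close>,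
  where the supersolution inequality for \<open>U\<close> contradicts strictness.\<close>

lemma strict_classical_subsol_le_visc_sol:
  assumes U: "visc_sol F eps g U"
    and \<phi>: "test_fn \<phi> \<phi>x \<phi>t \<phi>xx"
    and init: "\<And>x. \<phi> x 0 \<le> g x"
    and strict: "\<And>x t. 0 < t \<Longrightarrow> \<phi>t x t + F (\<phi>x x t) < eps * \<phi>xx x t"
    and coercive: "\<And>x t. 0 \<le> t \<Longrightarrow> a * \<bar>x\<bar> + b * t - c \<le> U x t - \<phi> x t"
    and a: "0 < a" and b: "0 < b" and t: "0 \<le> t"
  shows "\<phi> x t \<le> U x t"
proof -
  have "continuous_on (UNIV \<times> {0..}) (\<lambda>p. \<phi> (fst p) (snd p))"
    using test_fnD(4)[OF \<phi>] by (rule continuous_on_subset) simp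
  moreover have "continuous_on (UNIV \<times> {0..}) (\<lambda>p. U (fst p) (snd p))"
    using U unfolding visc_sol_def case_prod_unfold by blast
  ultimately have cont: "continuous_on (UNIV \<times> {0..}) (\<lambda>(x, t). U x t - \<phi> x t)"
    unfolding case_prod_unfold by (rule continuous_on_diff[rotated])
  obtain x0 t0 where min: "\<And>x t. 0 \<le> t \<Longrightarrow> U x0 t0 - \<phi> x0 t0 \<le> U x t - \<phi> x t" and t0: "0 \<le> t0"
    using continuous_coercive_attains_min[OF cont coercive a b] by metis
  show ?thesis
  proof (rule ccontr)
    assume "\<not> ?thesis"
    then have neg: "U x0 t0 - \<phi> x0 t0 < 0"
      using min[OF t, of x] by simp
    have "U x0 0 = g x0"
      using U unfolding visc_sol_def by blast
    then have "t0 \<noteq> 0"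
      using neg init[of x0] by auto
    with t0 have "0 < t0"
      by simp
    moreover have "loc_min_at (\<lambda>x t. U x t - \<phi> x t) x0 t0"
      unfolding loc_min_at_def using min by (intro exI[of _ 1]) auto
    ultimately have "eps * \<phi>xx x0 t0 \<le> \<phi>t x0 t0 + F (\<phi>x x0 t0)"
      using U \<phi> unfolding visc_sol_def by simp
    with strict[OF \<open>0 < t0\<close>, of x0] show False
      by simp
  qed
qed

lemma lipschitz_on_shift_le:
  fixes F :: "real \<Rightarrow> real"
  assumes L: "L-lipschitz_on {-(M + 1)..M + 1} F" and "\<bar>p\<bar> \<le> M" and "\<bar>d\<bar> \<le> 1"
  shows "F (p - d) \<le> F p + L * \<bar>d\<bar>"
proof -
  have "p - d \<in> {-(M + 1)..M + 1}" and "p \<in> {-(M + 1)..M + 1}"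
    using assms(2,3) by (auto simp: abs_le_iff)
  then have "dist (F (p - d)) (F p) \<le> L * dist (p - d) p"
    by (rule lipschitz_onD[OF L])
  then show ?thesis
    by (simp add: dist_real_def)
qed

lemma mult_le_square_plus:
  fixes \<delta> K s :: real
  assumes "0 < \<delta>"
  shows "K * s \<le> \<delta> * s\<^sup>2 + K\<^sup>2 / (4 * \<delta>)"
proof -
  have "0 \<le> (2 * \<delta> * s - K)\<^sup>2"
    by simp
  then have "4 * \<delta> * (K * s) \<le> 4 * \<delta> * (\<delta> * s\<^sup>2) + K\<^sup>2"
    by (simp add: power2_eq_square algebra_simps)
  then show ?thesis
    using assms by (simp add: field_simps)
qed

lemma penalised_strict_subsol_ineq:
  fixes F :: "real \<Rightarrow> real"
  assumes L: "L-lipschitz_on {-(M + 1)..M + 1} F" and "0 \<le> L" and eps: "0 \<le> eps"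
    and subsol: "vt + F vx \<le> eps * vxx" and grad: "\<bar>vx\<bar> \<le> M"
    and \<alpha>: "0 < \<alpha>" "\<alpha> \<le> 1" "(L + eps) * \<alpha> < \<delta>" and "0 \<le> \<delta> * s"
  shows "vt - \<delta> * (1 + 2 * s) + F (vx - \<alpha> * (y / bracket y)) < eps * (vxx - \<alpha> / bracket y ^ 3)"
proof -
  have shift: "\<bar>\<alpha> * (y / bracket y)\<bar> \<le> \<alpha>"
    using mult_left_mono[OF abs_div_bracket_le_1[of y], of \<alpha>] \<alpha> by (simp add: abs_mult)
  with \<alpha> have "\<bar>\<alpha> * (y / bracket y)\<bar> \<le> 1"
    by linarith
  from lipschitz_on_shift_le[OF L grad this]
  have "F (vx - \<alpha> * (y / bracket y)) \<le> F vx + L * \<alpha>"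
    using mult_left_mono[OF shift \<open>0 \<le> L\<close>] by linarith
  moreover have "eps * (\<alpha> / bracket y ^ 3) \<le> eps * \<alpha>"
    using eps \<alpha> bracket_ge_1[of y] by (intro mult_left_mono) (auto simp: divide_le_eq)
  ultimately show ?thesis
    using subsol \<alpha>(3) \<open>0 \<le> \<delta> * s\<close> by (simp add: algebra_simps)
qed

text \<open>Subtracting \<open>\<alpha> bracket x + \<delta> (t + t\<^sup>2)\<close> from \<open>v\<close> gives a strict subsolution (the gradient moves
  by at most \<open>\<alpha>\<close>, which costs at most \<open>(L + eps) \<alpha> < \<delta>\<close>) and makes \<open>U - \<phi>\<close> coercive
  (\<open>\<delta> t\<^sup>2\<close> absorbs the linear growth of \<open>v\<close>).\<close>

lemma penalised_classical_subsol_le_visc_sol: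
  assumes U: "visc_sol F eps g U" and eps: "0 \<le> eps" and L: "L-lipschitz_on {-(M + 1)..M + 1} F"
    and U_lower: "\<And>x t. 0 \<le> t \<Longrightarrow> - B \<le> U x t"
    and v: "test_fn v vx vt vxx"
    and init: "\<And>x. v x 0 \<le> g x"
    and subsol: "\<And>x t. 0 < t \<Longrightarrow> vt x t + F (vx x t) \<le> eps * vxx x t"
    and grad: "\<And>x t. \<bar>vx x t\<bar> \<le> M"
    and growth: "\<And>x t. 0 \<le> t \<Longrightarrow> v x t \<le> K1 + K2 * t"
    and \<delta>: "0 < \<delta>" "\<delta> \<le> 1" and t: "0 \<le> t"
  shows "v x t - \<delta> * (bracket x + t + t\<^sup>2) \<le> U x t"
proof -
  have "0 \<le> L"
    using L by (rule lipschitz_on_nonneg)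
  define \<alpha> where "\<alpha> = \<delta> / (L + eps + 1)"
  have \<alpha>: "0 < \<alpha>" "\<alpha> \<le> \<delta>" "(L + eps) * \<alpha> < \<delta>"
    using \<delta> \<open>0 \<le> L\<close> eps by (auto simp: \<alpha>_def field_simps)
  define \<phi> where "\<phi> x t = v x t - \<alpha> * bracket x - \<delta> * (t + t\<^sup>2)" for x t
  have \<phi>: "test_fn \<phi> (\<lambda>x t. vx x t - \<alpha> * (x / bracket x)) (\<lambda>x t. vt x t - \<delta> * (1 + 2 * t))
      (\<lambda>x t. vxx x t - \<alpha> / bracket x ^ 3)"
    using test_fn_diff[OF test_fn_diff[OF v test_fn_cmult[OF test_fn_bracket]]
        test_fn_cmult[OF test_fn_time_quadratic], of \<alpha> \<delta>]
    by (simp add: \<phi>_def[abs_def])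
  have strict: "vt y s - \<delta> * (1 + 2 * s) + F (vx y s - \<alpha> * (y / bracket y))
      < eps * (vxx y s - \<alpha> / bracket y ^ 3)" if s: "0 < s" for y s
    using \<delta> s \<alpha> by (intro penalised_strict_subsol_ineq[OF L \<open>0 \<le> L\<close> eps subsol[OF s] grad]) auto
  have coercive: "\<alpha> * \<bar>y\<bar> + \<delta> * s - (B + K1 + K2\<^sup>2 / (4 * \<delta>)) \<le> U y s - \<phi> y s" if s: "0 \<le> s" for y s
  proof -
    have "\<alpha> * \<bar>y\<bar> \<le> \<alpha> * bracket y"
      using \<alpha>(1) abs_le_bracket[of y] by simp
    then show ?thesis
      using U_lower[OF s, of y] growth[OF s, of y] mult_le_square_plus[OF \<delta>(1), of K2 s]
      unfolding \<phi>_def by (simp add: algebra_simps)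
  qed
  have "\<phi> x t \<le> U x t"
  proof (rule strict_classical_subsol_le_visc_sol[OF U \<phi> _ strict coercive \<alpha>(1) \<delta>(1) t])
    fix y
    have "0 \<le> \<alpha> * bracket y"
      using \<alpha>(1) bracket_ge_1[of y] by simp
    then show "\<phi> y 0 \<le> g y"
      using init[of y] unfolding \<phi>_def by simp
  qed
  moreover have "\<alpha> * bracket x \<le> \<delta> * bracket x"
    using \<alpha> bracket_ge_1[of x] by simp
  ultimately show ?thesis
    unfolding \<phi>_def by (simp add: algebra_simps)
qed

lemma classical_subsol_le_visc_sol:
  assumes U: "visc_sol F eps g U" and eps: "0 \<le> eps" and F: "loc_lipschitz F"
    and U_lower: "\<And>x t. 0 \<le> t \<Longrightarrow> - B \<le> U x t"
    and v: "test_fn v vx vt vxx"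
    and init: "\<And>x. v x 0 \<le> g x"
    and subsol: "\<And>x t. 0 < t \<Longrightarrow> vt x t + F (vx x t) \<le> eps * vxx x t"
    and grad: "\<And>x t. \<bar>vx x t\<bar> \<le> M"
    and growth: "\<And>x t. 0 \<le> t \<Longrightarrow> v x t \<le> K1 + K2 * t"
    and t: "0 \<le> t"
  shows "v x t \<le> U x t"
proof (rule field_le_epsilon)
  fix e :: real
  assume "0 < e"
  obtain L where L: "L-lipschitz_on {-(M + 1)..M + 1} F"
    using F unfolding loc_lipschitz_def by (meson compact_Icc)
  define C where "C = bracket x + t + t\<^sup>2"
  have "0 < C"
    using bracket_ge_1[of x] t by (simp add: C_def add_pos_nonneg)
  define \<delta> where "\<delta> = min 1 (e / C)"
  have \<delta>: "0 < \<delta>" "\<delta> \<le> 1"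
    using \<open>0 < e\<close> \<open>0 < C\<close> by (auto simp: \<delta>_def)
  moreover have "\<delta> * C \<le> e"
    using \<open>0 < C\<close> by (simp add: \<delta>_def min_def field_simps)
  ultimately show "v x t \<le> U x t + e"
    using penalised_classical_subsol_le_visc_sol[OF U eps L U_lower v init subsol grad growth \<delta> t, of x]
    unfolding C_def by linarith
qed

lemma visc_sol_le_classical_supersol:
  assumes U: "visc_sol F eps g U" and eps: "0 \<le> eps" and F: "loc_lipschitz F"
    and U_upper: "\<And>x t. 0 \<le> t \<Longrightarrow> U x t \<le> B"
    and w: "test_fn w wx wt wxx"
    and init: "\<And>x. g x \<le> w x 0"
    and supersol: "\<And>x t. 0 < t \<Longrightarrow> eps * wxx x t \<le> wt x t + F (wx x t)"
    and grad: "\<And>x t. \<bar>wx x t\<bar> \<le> M"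
    and growth: "\<And>x t. 0 \<le> t \<Longrightarrow> - K1 - K2 * t \<le> w x t"
    and t: "0 \<le> t"
  shows "U x t \<le> w x t"
proof -
  have "- w x t \<le> - U x t"
  proof (rule classical_subsol_le_visc_sol[OF visc_sol_reflect[OF U] eps loc_lipschitz_reflect[OF F]
        _ test_fn_uminus[OF w] _ _ _ _ t])
    show "- B \<le> - U y s" if "0 \<le> s" for y s
      using U_upper[OF that] by simp
    show "- w y 0 \<le> - g y" for y
      using init[of y] by simp
    show "- wt y s + - F (- (- wx y s)) \<le> eps * - wxx y s" if "0 < s" for y s
      using supersol[OF that, of y] by simp
    show "\<bar>- wx y s\<bar> \<le> M" for y s
      using grad[of y s] by simp
    show "- w y s \<le> K1 + K2 * s" if "0 \<le> s" for y s
      using growth[OF that, of y] by simp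
  qed
  then show ?thesis
    by simp
qed

section \<open>The Gaussian smoothing of the ramp\<close>

definition gauss :: "real \<Rightarrow> real" where
  "gauss z = exp (- (z\<^sup>2) / 4)"

lemma gauss_pos: "0 < gauss z"
  by (simp add: gauss_def)

lemma gauss_le_1: "gauss z \<le> 1"
  by (simp add: gauss_def)

lemma gauss_minus [simp]: "gauss (- z) = gauss z"
  by (simp add: gauss_def)

lemma gauss_has_derivative [derivative_intros]:
  "(f has_real_derivative f') (at x within S) \<Longrightarrow>
    ((\<lambda>x. gauss (f x)) has_real_derivative - (f x / 2) * gauss (f x) * f') (at x within S)"
  unfolding gauss_def by (auto intro!: derivative_eq_intros simp: field_simps)

lemma gauss_has_antiderivative: "\<exists>G. (\<forall>z. (G has_real_derivative gauss z) (at z)) \<and> G 0 = 0"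
proof -
  have "\<exists>G. \<forall>z::real. -\<infinity> < z \<longrightarrow> z < \<infinity> \<longrightarrow> (G has_vector_derivative gauss z) (at z)"
    by (rule einterval_antiderivative) (auto simp: gauss_def intro!: continuous_intros)
  then obtain G where G: "\<And>z. (G has_real_derivative gauss z) (at z)"
    by (auto simp: has_real_derivative_iff_has_vector_derivative)
  show ?thesis
    by (rule exI[of _ "\<lambda>z. G z - G 0"]) (auto intro!: derivative_eq_intros G)
qed

definition gauss_antideriv :: "real \<Rightarrow> real" where
  "gauss_antideriv = (SOME G. (\<forall>z. (G has_real_derivative gauss z) (at z)) \<and> G 0 = 0)"

lemma gauss_antideriv_0 [simp]: "gauss_antideriv 0 = 0"
  and gauss_antideriv_has_real_derivative: "(gauss_antideriv has_real_derivative gauss z) (at z)"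
  using someI_ex[OF gauss_has_antiderivative] unfolding gauss_antideriv_def by blast+

lemma gauss_antideriv_has_derivative [derivative_intros]:
  "(f has_real_derivative f') (at x within S) \<Longrightarrow>
    ((\<lambda>x. gauss_antideriv (f x)) has_real_derivative gauss (f x) * f') (at x within S)"
  using DERIV_chain2[OF gauss_antideriv_has_real_derivative] by blast

lemma gauss_antideriv_minus: "gauss_antideriv (- z) = - gauss_antideriv z"
proof -
  have "\<forall>z. ((\<lambda>z. gauss_antideriv z + gauss_antideriv (- z)) has_real_derivative 0) (at z)"
    by (auto intro!: derivative_eq_intros)
  from DERIV_isconst_all[OF this, of z 0] show ?thesis
    by simp
qed

lemma gauss_antideriv_mono:
  assumes "a \<le> b"
  shows "gauss_antideriv a \<le> gauss_antideriv b"
proof (rule DERIV_nonneg_imp_nondecreasing[OF assms])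
  fix y
  show "\<exists>d. (gauss_antideriv has_real_derivative d) (at y) \<and> 0 \<le> d"
    using gauss_antideriv_has_real_derivative[of y] gauss_pos[of y] by (intro exI[of _ "gauss y"]) simp
qed

lemma gauss_le_exp: "gauss z \<le> exp (1 - z)"
proof -
  have "- (z\<^sup>2) / 4 \<le> 1 - z"
    using sum_squares_ge_zero[of "z - 2" 0] by (simp add: power2_eq_square algebra_simps)
  then show ?thesis
    by (simp add: gauss_def)
qed

lemma gauss_antideriv_le_self:
  assumes "0 \<le> z"
  shows "gauss_antideriv z \<le> z"
proof -
  have "(\<lambda>z. z - gauss_antideriv z) 0 \<le> (\<lambda>z. z - gauss_antideriv z) z"
  proof (rule DERIV_nonneg_imp_nondecreasing[OF assms])
    fix y :: real
    have "((\<lambda>z. z - gauss_antideriv z) has_real_derivative 1 - gauss y) (at y)"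
      by (auto intro!: derivative_eq_intros)
    then show "\<exists>d. ((\<lambda>z. z - gauss_antideriv z) has_real_derivative d) (at y) \<and> 0 \<le> d"
      using gauss_le_1[of y] by auto
  qed
  then show ?thesis
    by simp
qed

lemma gauss_antideriv_le_2: "gauss_antideriv z \<le> 2"
proof (cases "z \<le> 1")
  case True
  then show ?thesis
    using gauss_antideriv_mono[OF True] gauss_antideriv_le_self[of 1] by simp
next
  case False
  have "(\<lambda>z. - exp (1 - z) - gauss_antideriv z) 1 \<le> (\<lambda>z. - exp (1 - z) - gauss_antideriv z) z"
  proof (rule DERIV_nonneg_imp_nondecreasing[of 1 z])
    fix y :: real
    have "((\<lambda>z. - exp (1 - z) - gauss_antideriv z) has_real_derivative exp (1 - y) - gauss y) (at y)"
      by (auto intro!: derivative_eq_intros)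
    then show "\<exists>d. ((\<lambda>z. - exp (1 - z) - gauss_antideriv z) has_real_derivative d) (at y) \<and> 0 \<le> d"
      using gauss_le_exp[of y] by auto
  qed (use False in simp)
  then have "gauss_antideriv z \<le> 1 + gauss_antideriv 1 - exp (1 - z)"
    by simp
  then show ?thesis
    using gauss_antideriv_le_self[of 1] exp_gt_zero[of "1 - z"] by linarith
qed

text \<open>The total mass \<open>\<integral>\<^sub>0\<^sup>\<infinity> gauss\<close> equals \<open>sqrt pi\<close>; the estimates below only use that it lies in \<open>(0, 2]\<close>.\<close>

definition gauss_mass :: real where
  "gauss_mass = Sup (range gauss_antideriv)"

lemma bdd_above_gauss_antideriv: "bdd_above (range gauss_antideriv)"
  using gauss_antideriv_le_2 by (auto intro!: bdd_aboveI[of _ 2])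

lemma gauss_antideriv_le_mass: "gauss_antideriv z \<le> gauss_mass"
  unfolding gauss_mass_def by (rule cSUP_upper[OF _ bdd_above_gauss_antideriv]) simp

lemma gauss_mass_le_2: "gauss_mass \<le> 2"
  unfolding gauss_mass_def by (rule cSUP_least) (auto simp: gauss_antideriv_le_2)

lemma gauss_mass_pos: "0 < gauss_mass"
proof -
  have "gauss_antideriv 0 < gauss_antideriv 1"
    by (rule DERIV_pos_imp_increasing[of 0 1]) (use gauss_antideriv_has_real_derivative gauss_pos in auto)
  then show ?thesis
    using gauss_antideriv_le_mass[of 1] by simp
qed

lemma neg_gauss_mass_le: "- gauss_mass \<le> gauss_antideriv z"
  using gauss_antideriv_le_mass[of "- z"] by (simp add: gauss_antideriv_minus)

lemma gauss_tail_small: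
  assumes "0 < \<eta>"
  obtains b where "a \<le> b" and "gauss_mass - gauss_antideriv b < \<eta>"
proof -
  have "gauss_mass - \<eta> < (SUP z. gauss_antideriv z)"
    using assms by (simp add: gauss_mass_def)
  then obtain b where "gauss_mass - \<eta> < gauss_antideriv b"
    using less_cSUP_iff[OF _ bdd_above_gauss_antideriv] by blast
  then have "gauss_mass - gauss_antideriv (max a b) < \<eta>"
    using gauss_antideriv_mono[of b "max a b"] by simp
  then show ?thesis
    by (rule that[rotated]) simp
qed

text \<open>The Mills-ratio bounds below follow by applying this to the difference of their two sides.\<close>

lemma DERIV_nonpos_imp_nonneg:
  fixes D :: "real \<Rightarrow> real"
  assumes deriv: "\<And>y. a \<le> y \<Longrightarrow> (D has_real_derivative D' y) (at y)"
    and nonpos: "\<And>y. a \<le> y \<Longrightarrow> D' y \<le> 0"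
    and tail: "\<And>\<eta>. 0 < \<eta> \<Longrightarrow> \<exists>b\<ge>a. - \<eta> \<le> D b"
  shows "0 \<le> D a"
proof (rule ccontr)
  assume "\<not> 0 \<le> D a"
  then obtain b where "a \<le> b" and "D a / 2 \<le> D b"
    using tail[of "- D a / 2"] by auto
  moreover have "D b \<le> D a"
    using \<open>a \<le> b\<close> deriv nonpos by (intro DERIV_nonpos_imp_nonincreasing[of a b]) auto
  ultimately show False
    using \<open>\<not> 0 \<le> D a\<close> by simp
qed

lemma gauss_tail_le:
  assumes a: "0 < a"
  shows "gauss_mass - gauss_antideriv a \<le> 2 / a * gauss a"
proof -
  have "0 \<le> 2 / a * gauss a - (gauss_mass - gauss_antideriv a)"
  proof (rule DERIV_nonpos_imp_nonneg[where D = "\<lambda>y. 2 / y * gauss y - (gauss_mass - gauss_antideriv y)"])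
    fix y assume "a \<le> y"
    with a show "((\<lambda>y. 2 / y * gauss y - (gauss_mass - gauss_antideriv y)) has_real_derivative
        - 2 / y\<^sup>2 * gauss y) (at y)"
      by (auto intro!: derivative_eq_intros simp: field_simps power2_eq_square)
    show "- 2 / y\<^sup>2 * gauss y \<le> 0"
      using gauss_pos[of y] by (simp add: field_simps)
  next
    fix \<eta> :: real assume "0 < \<eta>"
    then obtain b where "a \<le> b" "gauss_mass - gauss_antideriv b < \<eta>"
      by (rule gauss_tail_small)
    moreover have "0 < 2 / b * gauss b"
      using a \<open>a \<le> b\<close> gauss_pos[of b] by simp
    ultimately show "\<exists>b\<ge>a. - \<eta> \<le> 2 / b * gauss b - (gauss_mass - gauss_antideriv b)"
      by force
  qed
  then show ?thesis
    by simp
qed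

lemma gauss_tail_ge:
  assumes a: "0 < a"
  shows "2 * a / (a\<^sup>2 + 2) * gauss a \<le> gauss_mass - gauss_antideriv a"
proof -
  have "0 \<le> (gauss_mass - gauss_antideriv a) - 2 * a / (a\<^sup>2 + 2) * gauss a"
  proof (rule DERIV_nonpos_imp_nonneg[where D = "\<lambda>y. (gauss_mass - gauss_antideriv y) - 2 * y / (y\<^sup>2 + 2) * gauss y"])
    fix y :: real
    have "0 < y\<^sup>2 + 2"
      by (simp add: add_nonneg_pos)
    then have "y * y + 2 \<noteq> 0" and "(y * y + 2) * (y * y + 2) \<noteq> 0"
      by (simp_all add: power2_eq_square)
    then show "((\<lambda>y. (gauss_mass - gauss_antideriv y) - 2 * y / (y\<^sup>2 + 2) * gauss y) has_real_derivative
        - 8 * gauss y / (y\<^sup>2 + 2)\<^sup>2) (at y)"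
      by (auto intro!: derivative_eq_intros simp: field_simps power2_eq_square)
    show "- 8 * gauss y / (y\<^sup>2 + 2)\<^sup>2 \<le> 0"
      using gauss_pos[of y] by (simp add: field_simps)
  next
    fix \<eta> :: real assume "0 < \<eta>"
    define b where "b = max a (4 / \<eta>)"
    have b: "0 < b" "a \<le> b" "4 / \<eta> \<le> b"
      using a by (auto simp: b_def)
    have "2 * b / (b\<^sup>2 + 2) * gauss b \<le> 2 * b / (b\<^sup>2 + 2)"
      using gauss_le_1[of b] b by (intro mult_left_le) (auto intro!: divide_nonneg_pos add_pos_nonneg)
    also have "\<dots> \<le> 2 / b"
      using b by (simp add: field_simps power2_eq_square add_pos_pos)
    also have "\<dots> \<le> \<eta>"
      using b \<open>0 < \<eta>\<close> by (simp add: field_simps)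
    finally show "\<exists>b\<ge>a. - \<eta> \<le> (gauss_mass - gauss_antideriv b) - 2 * b / (b\<^sup>2 + 2) * gauss b"
      using b gauss_antideriv_le_mass[of b] by (intro exI[of _ b]) auto
  qed
  then show ?thesis
    by simp
qed

text \<open>\<open>gauss_cdf\<close> and \<open>gauss_pdf\<close> are the distribution function and density of \<open>X \<sim> N(0, 2)\<close>, the
  heat kernel at time 1; \<open>smooth_ramp z = E (z - X)\<^sup>+\<close> is a convex smoothing of \<open>max z 0\<close> with
  second derivative \<open>gauss_pdf\<close>.\<close>

definition gauss_cdf :: "real \<Rightarrow> real" where
  "gauss_cdf z = (gauss_antideriv z + gauss_mass) / (2 * gauss_mass)"

definition gauss_pdf :: "real \<Rightarrow> real" where
  "gauss_pdf z = gauss z / (2 * gauss_mass)"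

definition smooth_ramp :: "real \<Rightarrow> real" where
  "smooth_ramp z = z * gauss_cdf z + 2 * gauss_pdf z"

lemma gauss_cdf_has_derivative [derivative_intros]:
  "(f has_real_derivative f') (at x within S) \<Longrightarrow>
    ((\<lambda>x. gauss_cdf (f x)) has_real_derivative gauss_pdf (f x) * f') (at x within S)"
  unfolding gauss_cdf_def gauss_pdf_def using gauss_mass_pos
  by (auto intro!: derivative_eq_intros simp: field_simps)

lemma gauss_pdf_has_derivative [derivative_intros]:
  "(f has_real_derivative f') (at x within S) \<Longrightarrow>
    ((\<lambda>x. gauss_pdf (f x)) has_real_derivative - (f x / 2) * gauss_pdf (f x) * f') (at x within S)"
  unfolding gauss_pdf_def using gauss_mass_pos
  by (auto intro!: derivative_eq_intros simp: field_simps)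

lemma smooth_ramp_has_derivative [derivative_intros]:
  "(f has_real_derivative f') (at x within S) \<Longrightarrow>
    ((\<lambda>x. smooth_ramp (f x)) has_real_derivative gauss_cdf (f x) * f') (at x within S)"
  unfolding smooth_ramp_def by (auto intro!: derivative_eq_intros simp: algebra_simps)

lemma smooth_ramp_has_real_derivative: "(smooth_ramp has_real_derivative gauss_cdf z) (at z)"
  using smooth_ramp_has_derivative[OF DERIV_ident] by simp

lemma isCont_gauss_cdf: "isCont gauss_cdf z"
  using DERIV_isCont[OF gauss_cdf_has_derivative[OF DERIV_ident]] by simp

lemma isCont_gauss_pdf: "isCont gauss_pdf z"
  using DERIV_isCont[OF gauss_pdf_has_derivative[OF DERIV_ident]] by simp

lemma isCont_smooth_ramp: "isCont smooth_ramp z"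
  using DERIV_isCont[OF smooth_ramp_has_real_derivative] .

lemma continuous_on_gauss_cdf [continuous_intros]:
  "continuous_on S f \<Longrightarrow> continuous_on S (\<lambda>x. gauss_cdf (f x))"
  and continuous_on_gauss_pdf [continuous_intros]:
  "continuous_on S f \<Longrightarrow> continuous_on S (\<lambda>x. gauss_pdf (f x))"
  and continuous_on_smooth_ramp [continuous_intros]:
  "continuous_on S f \<Longrightarrow> continuous_on S (\<lambda>x. smooth_ramp (f x))"
  by (auto intro: continuous_on_compose2[of UNIV] continuous_at_imp_continuous_on
      isCont_gauss_cdf isCont_gauss_pdf isCont_smooth_ramp)

lemma gauss_cdf_nonneg: "0 \<le> gauss_cdf z"
  unfolding gauss_cdf_def using neg_gauss_mass_le[of z] gauss_mass_pos by simp

lemma gauss_cdf_le_1: "gauss_cdf z \<le> 1"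
  unfolding gauss_cdf_def using gauss_antideriv_le_mass[of z] gauss_mass_pos by simp

lemma gauss_cdf_mono: "a \<le> b \<Longrightarrow> gauss_cdf a \<le> gauss_cdf b"
  unfolding gauss_cdf_def using gauss_antideriv_mono[of a b] gauss_mass_pos
  by (simp add: divide_right_mono)

lemma gauss_cdf_minus: "gauss_cdf (- z) = 1 - gauss_cdf z"
  unfolding gauss_cdf_def using gauss_mass_pos by (simp add: gauss_antideriv_minus field_simps)

lemma gauss_pdf_minus [simp]: "gauss_pdf (- z) = gauss_pdf z"
  by (simp add: gauss_pdf_def)

lemma smooth_ramp_0: "smooth_ramp 0 = 1 / gauss_mass"
  by (simp add: smooth_ramp_def gauss_pdf_def gauss_def)

lemma smooth_ramp_minus: "smooth_ramp (- z) = smooth_ramp z - z"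
  by (simp add: smooth_ramp_def gauss_cdf_minus algebra_simps)

lemma smooth_ramp_mono:
  assumes "a \<le> b"
  shows "smooth_ramp a \<le> smooth_ramp b"
proof (rule DERIV_nonneg_imp_nondecreasing[OF assms])
  fix y
  show "\<exists>d. (smooth_ramp has_real_derivative d) (at y) \<and> 0 \<le> d"
    using smooth_ramp_has_real_derivative gauss_cdf_nonneg by blast
qed

lemma le_smooth_ramp:
  assumes "0 \<le> z"
  shows "z \<le> smooth_ramp z"
proof (cases "z = 0")
  case True
  then show ?thesis
    using gauss_mass_pos by (simp add: smooth_ramp_0)
next
  case False
  with assms have "0 < z"
    by simp
  then have "z * (gauss_mass - gauss_antideriv z) \<le> 2 * gauss z"
    using gauss_tail_le[of z] by (simp add: field_simps)
  then show ?thesis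
    unfolding smooth_ramp_def gauss_cdf_def gauss_pdf_def using gauss_mass_pos
    by (simp add: field_simps)
qed

lemma max_le_smooth_ramp: "max z 0 \<le> smooth_ramp z"
proof (cases "0 \<le> z")
  case True
  then show ?thesis
    using le_smooth_ramp[of z] smooth_ramp_mono[of 0 z] gauss_mass_pos by (simp add: smooth_ramp_0)
next
  case False
  then show ?thesis
    using le_smooth_ramp[of "- z"] smooth_ramp_minus[of "- z"] by simp
qed

lemma smooth_ramp_le: "smooth_ramp z \<le> max z 0 + smooth_ramp 0"
proof (cases "0 \<le> z")
  case True
  have "(\<lambda>z. smooth_ramp z - z) z \<le> (\<lambda>z. smooth_ramp z - z) 0"
  proof (rule DERIV_nonpos_imp_nonincreasing[OF True])
    fix y
    show "\<exists>d. ((\<lambda>z. smooth_ramp z - z) has_real_derivative d) (at y) \<and> d \<le> 0"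
      using DERIV_diff[OF smooth_ramp_has_real_derivative DERIV_ident, of y] gauss_cdf_le_1[of y]
      by (intro exI[of _ "gauss_cdf y - 1"]) simp
  qed
  with True show ?thesis
    by simp
next
  case False
  then show ?thesis
    using smooth_ramp_mono[of z 0] by simp
qed

lemma smooth_ramp_neg_le:
  assumes "0 < a"
  shows "smooth_ramp (- a) \<le> 4 / (a\<^sup>2 + 2) * gauss_pdf a"
proof -
  have "2 * a / (a\<^sup>2 + 2) * gauss_pdf a = 2 * a / (a\<^sup>2 + 2) * gauss a / (2 * gauss_mass)"
    by (simp add: gauss_pdf_def)
  also have "\<dots> \<le> (gauss_mass - gauss_antideriv a) / (2 * gauss_mass)"
    using gauss_mass_pos by (intro divide_right_mono gauss_tail_ge[OF assms]) simp
  also have "\<dots> = 1 - gauss_cdf a"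
    using gauss_mass_pos by (simp add: gauss_cdf_def field_simps)
  finally have "2 * a / (a\<^sup>2 + 2) * gauss_pdf a \<le> 1 - gauss_cdf a" .
  then have "a * (2 * a / (a\<^sup>2 + 2) * gauss_pdf a) \<le> a * (1 - gauss_cdf a)"
    using assms by (intro mult_left_mono) simp_all
  moreover have "0 < a\<^sup>2 + 2"
    by (simp add: add_nonneg_pos)
  ultimately show ?thesis
    by (simp add: smooth_ramp_def gauss_cdf_minus field_simps power2_eq_square)
qed

section \<open>The barriers\<close>

definition time_offset :: real where
  "time_offset = 1 / 10000"

text \<open>Test functions must be smooth for \<open>t < 0\<close> too, so the clock \<open>s + time_offset\<close> is continued
  to \<open>s < 0\<close> by \<open>time_offset * exp (s / time_offset)\<close>, which agrees with it to first order at \<open>0\<close>.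
  The offset keeps the width \<open>sqrt (clock s)\<close> of the heat kernel positive at \<open>s = 0\<close>.\<close>

definition clock :: "real \<Rightarrow> real" where
  "clock s = (if s \<in> {0..} then s + time_offset else time_offset * exp (s / time_offset))"

definition clock_rate :: "real \<Rightarrow> real" where
  "clock_rate s = (if s \<in> {0..} then 1 else exp (s / time_offset))"

definition width :: "real \<Rightarrow> real" where
  "width s = sqrt (clock s)"

lemma time_offset_pos: "0 < time_offset"
  by (simp add: time_offset_def)

lemma sqrt_time_offset: "sqrt time_offset = 1 / 100"
  by (simp add: time_offset_def real_sqrt_divide)

lemma clock_nonneg [simp]: "0 \<le> s \<Longrightarrow> clock s = s + time_offset"
  and clock_rate_nonneg [simp]: "0 \<le> s \<Longrightarrow> clock_rate s = 1"
  by (simp_all add: clock_def clock_rate_def)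

lemma clock_pos: "0 < clock s"
  using time_offset_pos by (auto simp: clock_def)

lemma clock_has_real_derivative: "(clock has_real_derivative clock_rate s) (at s)"
proof -
  have "((\<lambda>s. if s \<in> {0..} then s + time_offset else time_offset * exp (s / time_offset))
      has_vector_derivative (if s \<in> {0..} then 1 else exp (s / time_offset))) (at s within UNIV)"
  proof (rule has_vector_derivative_If_within_closures[where T = "{..<0}"])
    show "((\<lambda>s. s + time_offset) has_vector_derivative 1) (at s within {0..} \<union> (closure {0..} \<inter> closure {..<0}))"
      by (auto intro!: derivative_eq_intros simp: has_real_derivative_iff_has_vector_derivative[symmetric])
    show "((\<lambda>s. time_offset * exp (s / time_offset)) has_vector_derivative exp (s / time_offset))
        (at s within {..<0} \<union> (closure {0..} \<inter> closure {..<0}))"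
      using time_offset_pos
      by (auto intro!: derivative_eq_intros simp: has_real_derivative_iff_has_vector_derivative[symmetric])
  qed auto
  then show ?thesis
    unfolding clock_def[abs_def] clock_rate_def by (simp add: has_real_derivative_iff_has_vector_derivative)
qed

lemma continuous_on_clock_rate [continuous_intros]:
  assumes "continuous_on S f"
  shows "continuous_on S (\<lambda>x. clock_rate (f x))"
proof -
  have min: "clock_rate = (\<lambda>s. min 1 (exp (s / time_offset)))"
    using time_offset_pos by (auto simp: clock_rate_def min_def field_simps)
  show ?thesis
    unfolding min using assms time_offset_pos by (auto intro!: continuous_intros)
qed

lemma width_pos: "0 < width s"
  using clock_pos by (simp add: width_def)

lemma width_has_derivative [derivative_intros]:
  "(f has_real_derivative f') (at x within S) \<Longrightarrow>
    ((\<lambda>x. width (f x)) has_real_derivative clock_rate (f x) / (2 * width (f x)) * f') (at x within S)"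
proof -
  have "(width has_real_derivative clock_rate s / (2 * width s)) (at s)" for s
    using DERIV_chain2[OF DERIV_real_sqrt[OF clock_pos] clock_has_real_derivative, of s]
    unfolding width_def[abs_def] by (simp add: field_simps)
  then show "(f has_real_derivative f') (at x within S) \<Longrightarrow> ?thesis"
    using DERIV_chain2 by blast
qed

lemma continuous_on_width [continuous_intros]:
  "continuous_on S f \<Longrightarrow> continuous_on S (\<lambda>x. width (f x))"
  by (rule continuous_on_compose2[of UNIV width])
    (auto intro!: continuous_at_imp_continuous_on DERIV_isCont[OF width_has_derivative[OF DERIV_ident]])

text \<open>A solution of the heat equation \<open>w\<^sub>s = w\<^sub>z\<^sub>z\<close> for \<open>s > 0\<close>, since \<open>width s = sqrt (s + time_offset)\<close> there.\<close>

definition heat_ramp :: "real \<Rightarrow> real \<Rightarrow> real" where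
  "heat_ramp z s = width s * smooth_ramp (z / width s)"

lemma heat_ramp_has_derivative_space [derivative_intros]:
  "(f has_real_derivative f') (at x within S) \<Longrightarrow>
    ((\<lambda>x. heat_ramp (f x) s) has_real_derivative gauss_cdf (f x / width s) * f') (at x within S)"
  unfolding heat_ramp_def using width_pos[of s]
  by (auto intro!: derivative_eq_intros simp: field_simps)

lemma heat_ramp_has_derivative_time:
  assumes f: "(f has_real_derivative f') (at s)"
  shows "((\<lambda>s. heat_ramp (f s) s) has_real_derivative
      clock_rate s * gauss_pdf (f s / width s) / width s + gauss_cdf (f s / width s) * f') (at s)"
proof -
  define \<sigma> \<sigma>' where "\<sigma> = width s" and "\<sigma>' = clock_rate s / (2 * width s)"
  have "0 < \<sigma>"
    by (simp add: \<sigma>_def width_pos)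
  have w: "(width has_real_derivative \<sigma>') (at s)"
    using width_has_derivative[OF DERIV_ident] by (simp add: \<sigma>'_def)
  have "((\<lambda>s. f s / width s) has_real_derivative (f' * \<sigma> - f s * \<sigma>') / (\<sigma> * \<sigma>)) (at s)"
    using DERIV_divide[OF f w] \<open>0 < \<sigma>\<close> by (simp add: \<sigma>_def)
  from DERIV_mult'[OF w smooth_ramp_has_derivative[OF this]]
  have "((\<lambda>s. heat_ramp (f s) s) has_real_derivative
      \<sigma> * (gauss_cdf (f s / \<sigma>) * ((f' * \<sigma> - f s * \<sigma>') / (\<sigma> * \<sigma>))) + \<sigma>' * smooth_ramp (f s / \<sigma>)) (at s)"
    by (simp add: heat_ramp_def[abs_def] \<sigma>_def)
  moreover have "\<sigma> * (gauss_cdf (f s / \<sigma>) * ((f' * \<sigma> - f s * \<sigma>') / (\<sigma> * \<sigma>))) + \<sigma>' * smooth_ramp (f s / \<sigma>)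
      = clock_rate s * gauss_pdf (f s / \<sigma>) / \<sigma> + gauss_cdf (f s / \<sigma>) * f'"
    using \<open>0 < \<sigma>\<close> by (simp add: smooth_ramp_def \<sigma>'_def \<sigma>_def[symmetric] field_simps)
  ultimately show ?thesis
    by (simp add: \<sigma>_def)
qed

lemma max_le_heat_ramp: "max z 0 \<le> heat_ramp z s"
proof -
  have "width s * max (z / width s) 0 \<le> heat_ramp z s"
    unfolding heat_ramp_def using width_pos[of s] max_le_smooth_ramp by (intro mult_left_mono) auto
  then show ?thesis
    using width_pos[of s] by (simp add: max_def field_simps split: if_splits)
qed

lemma heat_ramp_le: "heat_ramp z s \<le> max z 0 + heat_ramp 0 s"
proof -
  have "heat_ramp z s \<le> width s * (max (z / width s) 0 + smooth_ramp 0)"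
    unfolding heat_ramp_def using width_pos[of s] smooth_ramp_le by (intro mult_left_mono) auto
  then show ?thesis
    using width_pos[of s] by (simp add: heat_ramp_def max_def field_simps split: if_splits)
qed

text \<open>With \<open>Z = (x - t + 1) / e\<close> the barrier is \<open>e W(Z, t)\<close>, where \<open>W\<close> solves the heat equation
  \<open>W\<^sub>t = W\<^sub>Z\<^sub>Z\<close> with \<open>W(Z, 0) \<approx> Z\<^sup>+ - 2 (Z - 2)\<^sup>+\<close>; so at \<open>t = 0\<close> it lies below the tent
  \<open>(x + 1)\<^sup>+ - 2 (x + 1 - 2 e)\<^sup>+\<close>.\<close>

definition barrier :: "real \<Rightarrow> real \<Rightarrow> real \<Rightarrow> real" where
  "barrier e x t = e * (heat_ramp ((x - t + 1) / e) t - 2 * heat_ramp ((x - t + 1) / e - 2) t - heat_ramp 0 0)"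

definition barrier_x :: "real \<Rightarrow> real \<Rightarrow> real \<Rightarrow> real" where
  "barrier_x e x t = gauss_cdf ((x - t + 1) / e / width t) - 2 * gauss_cdf (((x - t + 1) / e - 2) / width t)"

definition barrier_xx :: "real \<Rightarrow> real \<Rightarrow> real \<Rightarrow> real" where
  "barrier_xx e x t =
    (gauss_pdf ((x - t + 1) / e / width t) - 2 * gauss_pdf (((x - t + 1) / e - 2) / width t)) / (e * width t)"

definition barrier_t :: "real \<Rightarrow> real \<Rightarrow> real \<Rightarrow> real" where
  "barrier_t e x t = e\<^sup>2 * clock_rate t * barrier_xx e x t - barrier_x e x t"

lemma barrier_has_derivative_time:
  assumes e: "0 < e"
  shows "((\<lambda>s. barrier e x s) has_real_derivative barrier_t e x t) (at t)"
proof -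
  have w: "0 < width t"
    by (rule width_pos)
  define Z where "Z s = (x - s + 1) / e" for s
  have Z: "(Z has_real_derivative - 1 / e) (at t)"
    and Z2: "((\<lambda>s. Z s - 2) has_real_derivative - 1 / e) (at t)"
    unfolding Z_def[abs_def] using e by (auto intro!: derivative_eq_intros)
  have "((\<lambda>s. e * (heat_ramp (Z s) s - 2 * heat_ramp (Z s - 2) s - heat_ramp 0 0)) has_real_derivative
      e * ((clock_rate t * gauss_pdf (Z t / width t) / width t + gauss_cdf (Z t / width t) * (- 1 / e))
        - 2 * (clock_rate t * gauss_pdf ((Z t - 2) / width t) / width t
          + gauss_cdf ((Z t - 2) / width t) * (- 1 / e)) - 0)) (at t)"
    by (intro DERIV_cmult DERIV_diff heat_ramp_has_derivative_time Z Z2 DERIV_const)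
  moreover have "(\<lambda>s. barrier e x s) = (\<lambda>s. e * (heat_ramp (Z s) s - 2 * heat_ramp (Z s - 2) s - heat_ramp 0 0))"
    by (simp add: barrier_def Z_def)
  moreover have "e * ((clock_rate t * gauss_pdf (Z t / width t) / width t + gauss_cdf (Z t / width t) * (- 1 / e))
        - 2 * (clock_rate t * gauss_pdf ((Z t - 2) / width t) / width t
          + gauss_cdf ((Z t - 2) / width t) * (- 1 / e)) - 0) = barrier_t e x t"
    using e w by (simp add: barrier_t_def barrier_x_def barrier_xx_def Z_def field_simps power2_eq_square)
  ultimately show ?thesis
    by simp
qed

lemma test_fn_barrier:
  assumes e: "0 < e"
  shows "test_fn (barrier e) (barrier_x e) (barrier_t e) (barrier_xx e)"
proof (rule test_fnI)
  fix x t :: real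
  have w: "0 < width t"
    by (rule width_pos)
  show "((\<lambda>y. barrier e y t) has_real_derivative barrier_x e x t) (at x)"
    unfolding barrier_def[abs_def] barrier_x_def using e w
    by (auto intro!: derivative_eq_intros simp: field_simps)
  show "((\<lambda>y. barrier_x e y t) has_real_derivative barrier_xx e x t) (at x)"
    unfolding barrier_x_def[abs_def] barrier_xx_def using e w
    by (auto intro!: derivative_eq_intros simp: field_simps)
  show "((\<lambda>s. barrier e x s) has_real_derivative barrier_t e x t) (at t)"
    by (rule barrier_has_derivative_time[OF e])
next
  have "\<And>p. width (snd p) \<noteq> 0"
    using width_pos by (metis less_irrefl)
  moreover have "\<And>p. e * width (snd p) \<noteq> 0"
    using width_pos e by (metis mult_pos_pos less_irrefl)
  ultimately show "continuous_on UNIV (\<lambda>p. barrier e (fst p) (snd p))"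
    and "continuous_on UNIV (\<lambda>p. barrier_x e (fst p) (snd p))"
    and "continuous_on UNIV (\<lambda>p. barrier_t e (fst p) (snd p))"
    and "continuous_on UNIV (\<lambda>p. barrier_xx e (fst p) (snd p))"
    unfolding barrier_def heat_ramp_def barrier_t_def barrier_x_def barrier_xx_def using e
    by (auto intro!: continuous_intros)
qed

lemma barrier_transport_diffusion:
  assumes "0 < e" and "0 < t"
  shows "barrier_t e x t + barrier_x e x t = e\<^sup>2 * barrier_xx e x t"
proof -
  have "0 < width t"
    by (rule width_pos)
  with assms show ?thesis
    by (simp add: barrier_t_def barrier_xx_def power2_eq_square field_simps)
qed

lemma abs_barrier_x_le_1: "\<bar>barrier_x e x t\<bar> \<le> 1"
proof -
  let ?Z = "(x - t + 1) / e"
  have "(?Z - 2) / width t \<le> ?Z / width t"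
    by (rule divide_right_mono[OF _ less_imp_le[OF width_pos]]) simp
  then have "gauss_cdf ((?Z - 2) / width t) \<le> gauss_cdf (?Z / width t)"
    by (rule gauss_cdf_mono)
  then show ?thesis
    unfolding barrier_x_def using gauss_cdf_nonneg[of "(?Z - 2) / width t"] gauss_cdf_le_1[of "?Z / width t"]
    by auto
qed

lemma barrier_initial_le:
  assumes e: "0 < e" "e \<le> 1 / 2"
  shows "barrier e x 0 \<le> max (1 - \<bar>x\<bar>) 0"
proof -
  define Z where "Z = (x + 1) / e"
  have "heat_ramp Z 0 - 2 * heat_ramp (Z - 2) 0 - heat_ramp 0 0 \<le> max Z 0 - 2 * max (Z - 2) 0"
    using heat_ramp_le[of Z 0] max_le_heat_ramp[of "Z - 2" 0] by (smt (verit))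
  then have "barrier e x 0 \<le> e * (max Z 0 - 2 * max (Z - 2) 0)"
    unfolding barrier_def Z_def using e by (simp add: mult_left_mono)
  also have "\<dots> = max (x + 1) 0 - 2 * max (x + 1 - 2 * e) 0"
    unfolding Z_def using e by (simp add: max_def field_simps)
  also have "\<dots> \<le> max (1 - \<bar>x\<bar>) 0"
    using e by (auto simp: max_def abs_if)
  finally show ?thesis .
qed

lemma barrier_le_linear:
  assumes e: "0 < e" and t: "0 \<le> t"
  shows "barrier e x t \<le> e * (2 + smooth_ramp 0) + e * smooth_ramp 0 * t"
proof -
  define Z where "Z = (x - t + 1) / e"
  have h0: "0 < smooth_ramp 0"
    using gauss_mass_pos by (simp add: smooth_ramp_0)
  have "0 \<le> heat_ramp 0 0"
    using max_le_heat_ramp[of 0 0] by simp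
  moreover have "max Z 0 - 2 * max (Z - 2) 0 \<le> 2"
    by (auto simp: max_def)
  ultimately have "heat_ramp Z t - 2 * heat_ramp (Z - 2) t - heat_ramp 0 0 \<le> 2 + heat_ramp 0 t"
    using heat_ramp_le[of Z t] max_le_heat_ramp[of "Z - 2" t] by linarith
  also have "heat_ramp 0 t \<le> (1 + t) * smooth_ramp 0"
  proof -
    have "width t \<le> 1 + t"
      unfolding width_def using t time_offset_pos
      by (intro real_le_lsqrt) (auto simp: time_offset_def power2_eq_square algebra_simps)
    then show ?thesis
      unfolding heat_ramp_def using h0 by (simp add: mult_right_mono)
  qed
  finally have "barrier e x t \<le> e * (2 + (1 + t) * smooth_ramp 0)"
    unfolding barrier_def Z_def[symmetric] using e by (intro mult_left_mono) auto
  then show ?thesis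
    by (simp add: algebra_simps)
qed

lemma barrier_le_visc_sol:
  assumes U: "visc_sol F (e\<^sup>2) g U" and e: "0 < e" "e \<le> 1 / 2" and F: "loc_lipschitz F"
    and F_le: "\<And>p. p \<in> {-1..1} \<Longrightarrow> F p \<le> p"
    and init: "\<And>x. max (1 - \<bar>x\<bar>) 0 \<le> g x"
    and U_lower: "\<And>x t. 0 \<le> t \<Longrightarrow> - B \<le> U x t"
    and t: "0 \<le> t"
  shows "barrier e x t \<le> U x t"
proof (rule classical_subsol_le_visc_sol[OF U _ F U_lower test_fn_barrier[OF e(1)] _ _ abs_barrier_x_le_1
      barrier_le_linear[OF e(1)] t])
  show "barrier e y 0 \<le> g y" for y
    by (rule order_trans[OF barrier_initial_le[OF e] init])
  show "barrier_t e y s + F (barrier_x e y s) \<le> e\<^sup>2 * barrier_xx e y s" if "0 < s" for y s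
  proof -
    have "barrier_x e y s \<in> {-1..1}"
      using abs_barrier_x_le_1[of e y s] by (auto simp: abs_le_iff)
    then show ?thesis
      using F_le barrier_transport_diffusion[OF e(1) that, of y] by fastforce
  qed
qed simp

definition softplus :: "real \<Rightarrow> real" where
  "softplus y = ln (1 + exp y)"

definition logistic :: "real \<Rightarrow> real" where
  "logistic y = exp y / (1 + exp y)"

lemma one_plus_exp_pos: "0 < 1 + exp (y :: real)"
  by (simp add: add_pos_pos)

lemma logistic_pos: "0 < logistic y"
  and logistic_less_1: "logistic y < 1"
  using one_plus_exp_pos[of y] by (simp_all add: logistic_def)

lemma softplus_has_derivative [derivative_intros]:
  "(f has_real_derivative f') (at x within S) \<Longrightarrow>
    ((\<lambda>x. softplus (f x)) has_real_derivative logistic (f x) * f') (at x within S)"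
  unfolding softplus_def logistic_def using one_plus_exp_pos
  by (auto intro!: derivative_eq_intros simp: field_simps)

lemma logistic_has_derivative [derivative_intros]:
  "(f has_real_derivative f') (at x within S) \<Longrightarrow>
    ((\<lambda>x. logistic (f x)) has_real_derivative logistic (f x) * (1 - logistic (f x)) * f') (at x within S)"
proof -
  have "(logistic has_real_derivative logistic y * (1 - logistic y)) (at y)" for y
  proof -
    have p: "1 + exp y \<noteq> 0"
      using one_plus_exp_pos[of y] by simp
    have "(logistic has_real_derivative
        (exp y * (1 + exp y) - exp y * (0 + exp y)) / ((1 + exp y) * (1 + exp y))) (at y)"
      unfolding logistic_def[abs_def] by (rule DERIV_divide[OF DERIV_exp DERIV_add[OF DERIV_const DERIV_exp] p])
    moreover have "(exp y * (1 + exp y) - exp y * (0 + exp y)) / ((1 + exp y) * (1 + exp y))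
        = logistic y * (1 - logistic y)"
      using p by (simp add: logistic_def field_simps)
    ultimately show ?thesis
      by simp
  qed
  then show "(f has_real_derivative f') (at x within S) \<Longrightarrow> ?thesis"
    using DERIV_chain2 by blast
qed

lemma continuous_on_softplus [continuous_intros]:
  "continuous_on S f \<Longrightarrow> continuous_on S (\<lambda>x. softplus (f x))"
  and continuous_on_logistic [continuous_intros]:
  "continuous_on S f \<Longrightarrow> continuous_on S (\<lambda>x. logistic (f x))"
  unfolding softplus_def logistic_def using one_plus_exp_pos
  by (auto intro!: continuous_intros simp: less_imp_neq[symmetric])

lemma max_le_softplus: "max y 0 \<le> softplus y"
proof -
  have "y \<le> ln (1 + exp y)"
    by (subst ln_ge_iff) (auto simp: add_pos_pos)
  then show ?thesis
    by (simp add: softplus_def)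
qed

lemma softplus_le: "softplus y \<le> max y 0 + ln 2"
proof -
  have "1 + exp y \<le> 2 * exp (max y 0)"
    by (auto simp: max_def)
  then have "ln (1 + exp y) \<le> ln (2 * exp (max y 0))"
    using one_plus_exp_pos[of y] by simp
  then show ?thesis
    by (simp add: softplus_def ln_mult)
qed

lemma max_le_scaled_softplus:
  assumes "0 < d"
  shows "max y 0 \<le> d * softplus (y / d)"
proof -
  have "d * max (y / d) 0 \<le> d * softplus (y / d)"
    using assms max_le_softplus by (intro mult_left_mono) auto
  then show ?thesis
    using assms by (simp add: max_def field_simps split: if_splits)
qed

lemma scaled_softplus_le:
  assumes "0 < d"
  shows "d * softplus (y / d) \<le> max y 0 + d * ln 2"
proof -
  have "d * softplus (y / d) \<le> d * (max (y / d) 0 + ln 2)"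
    using assms softplus_le by (intro mult_left_mono) auto
  then show ?thesis
    using assms by (simp add: max_def field_simps split: if_splits)
qed

lemma test_fn_scaled_softplus:
  assumes d: "0 < d"
  shows "test_fn (\<lambda>x t. d * softplus ((x - t + c) / d)) (\<lambda>x t. logistic ((x - t + c) / d))
      (\<lambda>x t. - logistic ((x - t + c) / d))
      (\<lambda>x t. logistic ((x - t + c) / d) * (1 - logistic ((x - t + c) / d)) / d)"
  using d by (intro test_fnI) (auto intro!: derivative_eq_intros continuous_intros)

text \<open>Since \<open>F\<close> is the identity on \<open>[0, 1]\<close>, the regularisations \<open>d softplus ((x - t + c) / d)\<close> of the
  moving ramp \<open>(x - t + c)\<^sup>+\<close> are classical supersolutions of the first-order equation.\<close>

lemma visc_sol_le_ramp:
  assumes U: "visc_sol F 0 g U" and F: "loc_lipschitz F"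
    and F_id: "\<And>p. p \<in> {0..1} \<Longrightarrow> F p = p"
    and init: "\<And>x. g x \<le> max (x + c) 0"
    and U_upper: "\<And>x t. 0 \<le> t \<Longrightarrow> U x t \<le> B"
    and t: "0 \<le> t"
  shows "U x t \<le> max (x - t + c) 0"
proof (rule field_le_epsilon)
  fix \<eta> :: real
  assume "0 < \<eta>"
  define d where "d = \<eta> / ln 2"
  have d: "0 < d"
    using \<open>0 < \<eta>\<close> by (simp add: d_def)
  have "U x t \<le> d * softplus ((x - t + c) / d)"
  proof (rule visc_sol_le_classical_supersol[OF U order_refl F U_upper test_fn_scaled_softplus[OF d] _ _ _ _ t])
    show "g y \<le> d * softplus ((y - 0 + c) / d)" for y
      using order_trans[OF init max_le_scaled_softplus[OF d]] by simp
    show "0 * (logistic ((y - s + c) / d) * (1 - logistic ((y - s + c) / d)) / d)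
        \<le> - logistic ((y - s + c) / d) + F (logistic ((y - s + c) / d))" for y s
      using F_id[of "logistic ((y - s + c) / d)"] logistic_pos logistic_less_1 by (simp add: less_imp_le)
    show "\<bar>logistic ((y - s + c) / d)\<bar> \<le> 1" for y s
      using logistic_pos logistic_less_1 by (simp add: less_imp_le)
    show "- 0 - 0 * s \<le> d * softplus ((y - s + c) / d)" for y s
      using max_le_scaled_softplus[OF d, of "y - s + c"] by simp
  qed
  also have "\<dots> \<le> max (x - t + c) 0 + \<eta>"
    using scaled_softplus_le[OF d] by (simp add: d_def)
  finally show "U x t \<le> max (x - t + c) 0 + \<eta>" .
qed

section \<open>The estimate\<close>

lemma exp_minus_one_bounds: "100 / 272 \<le> exp (- 1 :: real)" "exp (- 1 :: real) \<le> 1 / 2"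
proof -
  have "2 \<le> exp (1 :: real)"
    using exp_ge_add_one_self[of 1] by simp
  then show "100 / 272 \<le> exp (- 1 :: real)" "exp (- 1 :: real) \<le> 1 / 2"
    using e_less_272 by (simp_all add: exp_minus field_simps)
qed

lemma sqrt_pi_ge: "177 / 100 \<le> sqrt pi"
  using pi_approx by (intro real_le_rsqrt) (simp add: power2_eq_square)

lemma width_1: "width 1 = sqrt (1 + time_offset)"
  by (simp add: width_def)

lemma heat_ramp_combination_ge:
  assumes a: "a = 2 / width 1"
  shows "(width 1 * (1 - 4 / (a\<^sup>2 + 2) * gauss a) - 1 / 100) / gauss_mass
    \<le> heat_ramp 0 1 - 2 * heat_ramp (- 2) 1 - heat_ramp 0 0"
proof -
  define k where "k = 4 / (a\<^sup>2 + 2) * gauss a"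
  have "0 < width 1"
    by (rule width_pos)
  then have "heat_ramp (- 2) 1 = width 1 * smooth_ramp (- a)"
    by (simp add: heat_ramp_def a)
  also have "\<dots> \<le> width 1 * (4 / (a\<^sup>2 + 2) * gauss_pdf a)"
    using smooth_ramp_neg_le \<open>0 < width 1\<close> by (intro mult_left_mono) (auto simp: a)
  also have "\<dots> = width 1 * k / (2 * gauss_mass)"
    by (simp add: k_def gauss_pdf_def)
  finally have "heat_ramp (- 2) 1 \<le> width 1 * k / (2 * gauss_mass)" .
  moreover have "heat_ramp 0 1 = width 1 / gauss_mass" and "heat_ramp 0 0 = 1 / 100 / gauss_mass"
    by (simp_all add: heat_ramp_def smooth_ramp_0 width_def sqrt_time_offset)
  ultimately have "(width 1 * (1 - k) - 1 / 100) / gauss_mass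
      \<le> heat_ramp 0 1 - 2 * heat_ramp (- 2) 1 - heat_ramp 0 0"
    using gauss_mass_pos by (simp add: field_simps)
  then show ?thesis
    by (simp add: k_def)
qed

lemma gauss_tail_coefficient_le:
  assumes a: "a = 2 / width 1"
  shows "4 / (a\<^sup>2 + 2) * gauss a \<le> 67 / 100 * exp (- 1)"
proof -
  have a_sq: "a\<^sup>2 = 4 / (1 + time_offset)"
    using time_offset_pos by (simp add: a width_1 power_divide)
  then have "- (a\<^sup>2) / 4 \<le> - 1 + time_offset"
    by (simp add: time_offset_def)
  then have "gauss a \<le> exp (- 1) * exp time_offset"
    by (simp add: gauss_def exp_add[symmetric])
  also have "\<dots> \<le> exp (- 1) * (1 + 2 * time_offset)"
    using real_exp_bound_lemma[of time_offset] by (simp add: time_offset_def)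
  finally have "gauss a \<le> exp (- 1) * (1 + 2 * time_offset)" .
  moreover have "599 / 100 \<le> a\<^sup>2 + 2"
    unfolding a_sq by (simp add: time_offset_def)
  ultimately have "4 / (a\<^sup>2 + 2) * gauss a \<le> 4 / (599 / 100) * (exp (- 1) * (1 + 2 * time_offset))"
    using gauss_pos[of a] by (intro mult_mono frac_le) auto
  also have "\<dots> \<le> 67 / 100 * exp (- 1)"
    using exp_gt_zero[of "- 1"] by (simp add: time_offset_def)
  finally show ?thesis .
qed

text \<open>The slack of this estimate pays for replacing \<open>gauss_mass = sqrt pi\<close> by the upper bound \<open>2\<close>
  and for the time offset.\<close>

lemma heat_ramp_combination_ge_const:
  "(exp 1 - 1) / (sqrt pi * exp 1) \<le> heat_ramp 0 1 - 2 * heat_ramp (- 2) 1 - heat_ramp 0 0"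
proof -
  define a where "a = 2 / width 1"
  define k where "k = 4 / (a\<^sup>2 + 2) * gauss a"
  have k: "k \<le> 67 / 100 * exp (- 1)"
    unfolding k_def a_def by (rule gauss_tail_coefficient_le) simp
  then have "0 \<le> 1 - k"
    using exp_minus_one_bounds by simp
  moreover have "1 \<le> width 1"
    using time_offset_pos by (simp add: width_1)
  ultimately have "1 - k \<le> width 1 * (1 - k)"
    using mult_right_mono by fastforce
  have "(exp 1 - 1) / (sqrt pi * exp 1) = (1 - exp (- 1)) / sqrt pi"
    by (simp add: exp_minus field_simps)
  also have "\<dots> \<le> (1 - exp (- 1)) / (177 / 100)"
    using sqrt_pi_ge exp_minus_one_bounds by (intro divide_left_mono) auto
  also have "\<dots> \<le> (1 - 67 / 100 * exp (- 1) - 1 / 100) / 2"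
    using exp_minus_one_bounds by simp
  also have "\<dots> \<le> (1 - k - 1 / 100) / 2"
    using k by simp
  also have "\<dots> \<le> (1 - k - 1 / 100) / gauss_mass"
    using k exp_minus_one_bounds gauss_mass_pos gauss_mass_le_2 by (intro divide_left_mono) auto
  also have "\<dots> \<le> (width 1 * (1 - k) - 1 / 100) / gauss_mass"
    using \<open>1 - k \<le> width 1 * (1 - k)\<close> gauss_mass_pos by (intro divide_right_mono) auto
  also have "\<dots> \<le> heat_ramp 0 1 - 2 * heat_ramp (- 2) 1 - heat_ramp 0 0"
    unfolding k_def by (rule heat_ramp_combination_ge[OF a_def])
  finally show ?thesis .
qed

lemma BUC_bounded:
  assumes "BUC u"
  obtains B where "\<And>x t. 0 \<le> t \<Longrightarrow> - B \<le> u x t" and "\<And>x t. 0 \<le> t \<Longrightarrow> u x t \<le> B"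
proof -
  obtain B where B: "\<And>y. y \<in> (\<lambda>(x, t). u x t) ` (UNIV \<times> {0..}) \<Longrightarrow> norm y \<le> B"
    using assms unfolding BUC_def bounded_iff by blast
  have "- B \<le> u x t \<and> u x t \<le> B" if "0 \<le> t" for x t
    using B[of "u x t"] that unfolding abs_le_iff[symmetric] by force
  then show ?thesis
    by (intro that) auto
qed

theorem theorem1p3:
  fixes F :: "real \<Rightarrow> real" and g :: "real \<Rightarrow> real"
    and \<epsilon> :: real and u\<epsilon> u :: "real \<Rightarrow> real \<Rightarrow> real"
  assumes "loc_lipschitz F"
    and "\<And>p. p \<in> {0..1} \<Longrightarrow> F p = p"
    and "\<And>p. p \<in> {-1..0} \<Longrightarrow> F p \<le> p"
    and "\<And>x. g x = max (1 - \<bar>x\<bar>) 0"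
    and "\<epsilon> \<in> {0<..<1/4}"
    and "visc_sol F \<epsilon> g u\<epsilon>" and "BUC u\<epsilon>"
    and "visc_sol F 0 g u" and "BUC u"
  shows "\<bar>u\<epsilon> 0 1 - u 0 1\<bar> \<ge> (exp 1 - 1) / (sqrt pi * exp 1) * sqrt \<epsilon>"
proof -
  note F = assms(1) and F_id = assms(2) and g = assms(4)
  obtain B where u_upper: "\<And>x t. 0 \<le> t \<Longrightarrow> u x t \<le> B"
    using BUC_bounded[OF assms(9)] by metis
  obtain B\<epsilon> where u\<epsilon>_lower: "\<And>x t. 0 \<le> t \<Longrightarrow> - B\<epsilon> \<le> u\<epsilon> x t"
    using BUC_bounded[OF assms(7)] by metis
  have g_le: "g x \<le> max (x + 1) 0" and le_g: "max (1 - \<bar>x\<bar>) 0 \<le> g x" for x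
    using g[of x] by auto
  have "u 0 1 \<le> max (0 - 1 + 1) 0"
    by (rule visc_sol_le_ramp[OF assms(8) F F_id g_le u_upper zero_le_one])
  define e where "e = sqrt \<epsilon>"
  have e: "0 < e" "e \<le> 1 / 2" and \<epsilon>: "\<epsilon> = e\<^sup>2"
    using assms(5) real_sqrt_le_mono[of \<epsilon> "1 / 4"] by (auto simp: e_def real_sqrt_divide)
  have F_le: "F p \<le> p" if "p \<in> {-1..1}" for p
    using F_id[of p] assms(3)[of p] that by (cases "0 \<le> p") auto
  have "barrier e 0 1 \<le> u\<epsilon> 0 1"
    using assms(6) unfolding \<epsilon> by (rule barrier_le_visc_sol[OF _ e F F_le le_g u\<epsilon>_lower zero_le_one])
  moreover have "(exp 1 - 1) / (sqrt pi * exp 1) * e \<le> barrier e 0 1"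
    using mult_right_mono[OF heat_ramp_combination_ge_const, of e] e by (simp add: barrier_def mult.commute)
  ultimately show ?thesis
    using \<open>u 0 1 \<le> max (0 - 1 + 1) 0\<close> by (simp add: e_def)
qed

end
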